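(* Let $\Phi:\mathbb{R}^n\to\mathbb{R}$ be convex, of class $C^2$, bounded below, with $\operatorname{Argmin}\Phi\neq\emptyset$, and let $\alpha,\beta>0$. Consider $\dot x=v$, $\dot v=-\alpha v-\nabla\Phi(x)-\beta\nabla^2\Phi(x)v$. Let $W(x,v):=(\alpha\beta+1)\Phi(x)+\tfrac12\|v+\beta\nabla\Phi(x)\|^2$, fix $z\in\operatorname{Argmin}\Phi$, and for $\varepsilon>0$ let \[ W_\varepsilon(x,v):=W(x,v)+\varepsilon\Big(\tfrac{\alpha}{2}\|x-z\|^2+\langle v+\beta\nabla\Phi(x),\,x-z\rangle\Big). \] If $0<\varepsilon<\min\{\tfrac23\alpha,\ \tfrac2\beta\}$, then along every solution \[ \tfrac{d}{dt}W_\varepsilon(x(t),v(t))\le -c_\varepsilon\big(\|v(t)\|^2+\|\nabla\Phi(x(t))\|^2\big),\qquad c_\varepsilon:=\min\Big\{\alpha-\tfrac32\varepsilon,\ \beta-\tfrac{\beta^2}{2}\varepsilon\Big\}>0. \] *)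

theory Defs
  imports "HOL-Analysis.Analysis"
begin

definition Argmin :: "('a \<Rightarrow> real) \<Rightarrow> 'a set" where
  "Argmin \<Phi> = {z. \<forall>y. \<Phi> z \<le> \<Phi> y}"

definition W_energy ::
  "real \<Rightarrow> real \<Rightarrow> ('a::real_inner \<Rightarrow> real) \<Rightarrow> ('a \<Rightarrow> 'a) \<Rightarrow> 'a \<Rightarrow> 'a \<Rightarrow> real" where
  "W_energy \<alpha> \<beta> \<Phi> G x v = (\<alpha> * \<beta> + 1) * \<Phi> x + 1/2 * (norm (v + \<beta> *\<^sub>R G x))\<^sup>2"

definition W_eps ::
  "real \<Rightarrow> real \<Rightarrow> ('a::real_inner \<Rightarrow> real) \<Rightarrow> ('a \<Rightarrow> 'a) \<Rightarrow> 'a \<Rightarrow> real \<Rightarrow> 'a \<Rightarrow> 'a \<Rightarrow> real" where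
  "W_eps \<alpha> \<beta> \<Phi> G z \<epsilon> x v = W_energy \<alpha> \<beta> \<Phi> G x v
     + \<epsilon> * (\<alpha> / 2 * (norm (x - z))\<^sup>2 + inner (v + \<beta> *\<^sub>R G x) (x - z))"

end

theory Submission
  imports Defs
begin

(* Along a solution, u = v + beta grad Phi(x) satisfies u' = -alpha v - grad Phi(x): the Hessian
   term of the dynamics is exactly the derivative of beta grad Phi(x). Hence
   W' = -alpha |v|^2 - beta |grad Phi(x)|^2, and the perturbation
   alpha/2 |x - z|^2 + <u, x - z> has derivative <grad Phi(x), z - x> + |v|^2 + beta <grad Phi(x), v>.
   The first term is nonpositive because z minimises the convex function Phi, and Young's
   inequality bounds the last one by (|v|^2 + beta^2 |grad Phi(x)|^2) / 2. *)


lemma convex_on_line: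
  fixes \<Phi> :: "'a::real_vector \<Rightarrow> real"
  assumes "convex_on UNIV \<Phi>"
  shows "convex_on UNIV (\<lambda>s. \<Phi> (y + s *\<^sub>R d))"
proof (rule convex_onI)
  fix t a b :: real
  assume "0 < t" "t < 1"
  have "y + ((1 - t) *\<^sub>R a + t *\<^sub>R b) *\<^sub>R d = (1 - t) *\<^sub>R (y + a *\<^sub>R d) + t *\<^sub>R (y + b *\<^sub>R d)"
    by (simp add: algebra_simps)
  then show "\<Phi> (y + ((1 - t) *\<^sub>R a + t *\<^sub>R b) *\<^sub>R d) \<le> (1 - t) * \<Phi> (y + a *\<^sub>R d) + t * \<Phi> (y + b *\<^sub>R d)"
    using convex_onD[OF assms, of t] \<open>0 < t\<close> \<open>t < 1\<close> by simp
qed simp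

lemma convex_on_imp_above_tangent_hyperplane:
  fixes \<Phi> :: "'a::real_normed_vector \<Rightarrow> real"
  assumes convex: "convex_on UNIV \<Phi>"
    and deriv: "(\<Phi> has_derivative \<Phi>') (at y)"
  shows "\<Phi>' (z - y) \<le> \<Phi> z - \<Phi> y"
proof -
  define f where "f = (\<lambda>s. \<Phi> (y + s *\<^sub>R (z - y)))"
  have line: "((\<lambda>s. y + s *\<^sub>R (z - y)) has_derivative (\<lambda>h. h *\<^sub>R (z - y))) (at 0)"
    by (auto intro!: derivative_eq_intros)
  have "(f has_derivative (\<lambda>h. h * \<Phi>' (z - y))) (at 0)"
    using has_derivative_compose[OF line, of \<Phi> \<Phi>'] deriv
      linear_scale[OF has_derivative_linear[OF deriv]]
    by (simp add: f_def)
  then have "(f has_field_derivative \<Phi>' (z - y)) (at 0 within UNIV)"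
    by (simp add: has_field_derivative_def mult.commute[of _ "\<Phi>' (z - y)"])
  from convex_on_imp_above_tangent[OF convex_on_line[OF convex] _ _ _ this[unfolded f_def], of 1]
  show ?thesis by (simp add: f_def)
qed

lemma convex_gradient_inner_minimizer_nonpos:
  fixes \<Phi> :: "'a::real_inner \<Rightarrow> real"
  assumes "convex_on UNIV \<Phi>" "(\<Phi> has_derivative (\<lambda>h. g \<bullet> h)) (at y)" "z \<in> Argmin \<Phi>"
  shows "g \<bullet> (z - y) \<le> 0"
proof -
  have "\<Phi> z \<le> \<Phi> y" using assms(3) by (simp add: Argmin_def)
  with convex_on_imp_above_tangent_hyperplane[OF assms(1,2), of z] show ?thesis by simp
qed

lemma has_vector_derivative_shifted_velocity:
  fixes x v :: "real \<Rightarrow> 'a::real_normed_vector"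
  assumes hess: "(G has_derivative H) (at (x t))"
    and x': "(x has_vector_derivative v t) (at t within T)"
    and v': "(v has_vector_derivative (- \<alpha> *\<^sub>R v t - G (x t) - \<beta> *\<^sub>R H (v t))) (at t within T)"
  shows "((\<lambda>s. v s + \<beta> *\<^sub>R G (x s)) has_vector_derivative - \<alpha> *\<^sub>R v t - G (x t)) (at t within T)"
proof -
  have "((\<lambda>s. G (x s)) has_vector_derivative H (v t)) (at t within T)"
    using vector_derivative_diff_chain_within[OF x' has_derivative_at_withinI[OF hess]]
    by (simp add: o_def)
  from has_vector_derivative_add[OF v' has_vector_derivative_scaleR[OF DERIV_const[of \<beta>] this]]
  show ?thesis by (rule has_vector_derivative_eq_rhs) (simp add: algebra_simps)
qed

lemma has_real_derivative_W_energy_along_solution: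
  fixes x v :: "real \<Rightarrow> 'a::real_inner"
  assumes grad: "(\<Phi> has_derivative (\<lambda>h. G (x t) \<bullet> h)) (at (x t))"
    and hess: "(G has_derivative H) (at (x t))"
    and x': "(x has_vector_derivative v t) (at t within T)"
    and v': "(v has_vector_derivative (- \<alpha> *\<^sub>R v t - G (x t) - \<beta> *\<^sub>R H (v t))) (at t within T)"
  shows "((\<lambda>s. W_energy \<alpha> \<beta> \<Phi> G (x s) (v s)) has_real_derivative
           - \<alpha> * (norm (v t))\<^sup>2 - \<beta> * (norm (G (x t)))\<^sup>2) (at t within T)"
proof -
  define u where "u s = v s + \<beta> *\<^sub>R G (x s)" for s
  have u': "(u has_derivative (\<lambda>h. h *\<^sub>R (- \<alpha> *\<^sub>R v t - G (x t)))) (at t within T)"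
    using has_vector_derivative_shifted_velocity[OF hess x' v']
    by (simp add: u_def[abs_def] has_vector_derivative_def)
  have \<Phi>': "((\<lambda>s. \<Phi> (x s)) has_derivative (\<lambda>h. h * (G (x t) \<bullet> v t))) (at t within T)"
    using has_derivative_compose[OF x'[unfolded has_vector_derivative_def] grad] by simp
  have W: "W_energy \<alpha> \<beta> \<Phi> G (x s) (v s) = (\<alpha> * \<beta> + 1) * \<Phi> (x s) + (u s \<bullet> u s) / 2" for s
    by (simp add: W_energy_def u_def power2_norm_eq_inner)
  have "((\<lambda>s. W_energy \<alpha> \<beta> \<Phi> G (x s) (v s)) has_real_derivative
      (\<alpha> * \<beta> + 1) * (G (x t) \<bullet> v t) + u t \<bullet> (- \<alpha> *\<^sub>R v t - G (x t))) (at t within T)"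
    unfolding has_field_derivative_def W
    by (rule derivative_eq_intros \<Phi>' u' refl | simp add: fun_eq_iff inner_commute inner_diff_right field_simps)+
  moreover have "(\<alpha> * \<beta> + 1) * (G (x t) \<bullet> v t) + u t \<bullet> (- \<alpha> *\<^sub>R v t - G (x t))
      = - \<alpha> * (norm (v t))\<^sup>2 - \<beta> * (norm (G (x t)))\<^sup>2"
    by (simp add: u_def power2_norm_eq_inner inner_commute algebra_simps)
  ultimately show ?thesis by simp
qed

lemma has_real_derivative_W_eps_along_solution:
  fixes x v :: "real \<Rightarrow> 'a::real_inner"
  assumes grad: "(\<Phi> has_derivative (\<lambda>h. G (x t) \<bullet> h)) (at (x t))"
    and hess: "(G has_derivative H) (at (x t))"
    and x': "(x has_vector_derivative v t) (at t within T)"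
    and v': "(v has_vector_derivative (- \<alpha> *\<^sub>R v t - G (x t) - \<beta> *\<^sub>R H (v t))) (at t within T)"
  shows "((\<lambda>s. W_eps \<alpha> \<beta> \<Phi> G z \<epsilon> (x s) (v s)) has_real_derivative
           - \<alpha> * (norm (v t))\<^sup>2 - \<beta> * (norm (G (x t)))\<^sup>2
           + \<epsilon> * (G (x t) \<bullet> (z - x t) + (norm (v t))\<^sup>2 + \<beta> * (G (x t) \<bullet> v t))) (at t within T)"
proof -
  define u where "u s = v s + \<beta> *\<^sub>R G (x s)" for s
  define P where "P s = \<alpha> / 2 * ((x s - z) \<bullet> (x s - z)) + u s \<bullet> (x s - z)" for s
  have u': "(u has_derivative (\<lambda>h. h *\<^sub>R (- \<alpha> *\<^sub>R v t - G (x t)))) (at t within T)"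
    using has_vector_derivative_shifted_velocity[OF hess x' v']
    by (simp add: u_def[abs_def] has_vector_derivative_def)
  have x'': "(x has_derivative (\<lambda>h. h *\<^sub>R v t)) (at t within T)"
    using x' by (simp add: has_vector_derivative_def)
  have "(P has_real_derivative
      \<alpha> * ((x t - z) \<bullet> v t) + (- \<alpha> *\<^sub>R v t - G (x t)) \<bullet> (x t - z) + u t \<bullet> v t) (at t within T)"
    unfolding has_field_derivative_def P_def[abs_def]
    by (rule derivative_eq_intros x'' u' refl | simp add: fun_eq_iff inner_commute inner_diff_right field_simps)+
  moreover have "\<alpha> * ((x t - z) \<bullet> v t) + (- \<alpha> *\<^sub>R v t - G (x t)) \<bullet> (x t - z) + u t \<bullet> v t
      = G (x t) \<bullet> (z - x t) + (norm (v t))\<^sup>2 + \<beta> * (G (x t) \<bullet> v t)"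
    by (simp add: u_def power2_norm_eq_inner inner_commute algebra_simps)
  ultimately have P': "(P has_real_derivative
      G (x t) \<bullet> (z - x t) + (norm (v t))\<^sup>2 + \<beta> * (G (x t) \<bullet> v t)) (at t within T)"
    by simp
  have "W_eps \<alpha> \<beta> \<Phi> G z \<epsilon> (x s) (v s) = W_energy \<alpha> \<beta> \<Phi> G (x s) (v s) + \<epsilon> * P s" for s
    by (simp add: W_eps_def P_def u_def power2_norm_eq_inner)
  then show ?thesis
    using DERIV_add[OF has_real_derivative_W_energy_along_solution[OF grad hess x' v'] DERIV_cmult[OF P', of \<epsilon>]]
    by simp
qed

lemma W_eps_derivative_bound:
  fixes g w d :: "'a::real_inner"
  assumes "g \<bullet> d \<le> 0" and "0 \<le> \<epsilon>"
  shows "- \<alpha> * (norm w)\<^sup>2 - \<beta> * (norm g)\<^sup>2 + \<epsilon> * (g \<bullet> d + (norm w)\<^sup>2 + \<beta> * (g \<bullet> w))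
    \<le> - min (\<alpha> - 3/2 * \<epsilon>) (\<beta> - \<beta>\<^sup>2 / 2 * \<epsilon>) * ((norm w)\<^sup>2 + (norm g)\<^sup>2)"
proof -
  let ?c = "min (\<alpha> - 3/2 * \<epsilon>) (\<beta> - \<beta>\<^sup>2 / 2 * \<epsilon>)"
  have young: "2 * (\<beta> * (g \<bullet> w)) \<le> (norm w)\<^sup>2 + \<beta>\<^sup>2 * (norm g)\<^sup>2"
    unfolding power2_norm_eq_inner using inner_ge_zero[of "w - \<beta> *\<^sub>R g"]
    by (simp add: inner_commute power2_eq_square algebra_simps)
  have "\<epsilon> * (g \<bullet> d + (norm w)\<^sup>2 + \<beta> * (g \<bullet> w)) \<le> \<epsilon> * (3/2 * (norm w)\<^sup>2 + \<beta>\<^sup>2 / 2 * (norm g)\<^sup>2)"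
    using assms young by (intro mult_left_mono) auto
  then have "- \<alpha> * (norm w)\<^sup>2 - \<beta> * (norm g)\<^sup>2 + \<epsilon> * (g \<bullet> d + (norm w)\<^sup>2 + \<beta> * (g \<bullet> w))
      \<le> - ((\<alpha> - 3/2 * \<epsilon>) * (norm w)\<^sup>2 + (\<beta> - \<beta>\<^sup>2 / 2 * \<epsilon>) * (norm g)\<^sup>2)"
    by (simp add: algebra_simps)
  also have "\<dots> \<le> - (?c * (norm w)\<^sup>2 + ?c * (norm g)\<^sup>2)"
    unfolding neg_le_iff_le by (intro add_mono mult_right_mono) auto
  also have "\<dots> = - ?c * ((norm w)\<^sup>2 + (norm g)\<^sup>2)"
    by (simp add: algebra_simps)
  finally show ?thesis .
qed

theorem mainTheorem11:
  fixes \<Phi> :: "real ^ 'n \<Rightarrow> real"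
    and G :: "real ^ 'n \<Rightarrow> real ^ 'n"
    and H :: "real ^ 'n \<Rightarrow> ((real ^ 'n) \<Rightarrow>\<^sub>L (real ^ 'n))"
    and \<alpha> \<beta> \<epsilon> :: real
    and z :: "real ^ 'n"
    and T :: "real set"
    and x v :: "real \<Rightarrow> real ^ 'n"
  assumes convex: "convex_on UNIV \<Phi>"
    and grad: "\<And>y. (\<Phi> has_derivative (\<lambda>h. G y \<bullet> h)) (at y)"
    and hess: "\<And>y. (G has_derivative blinfun_apply (H y)) (at y)"
    and hess_cont: "continuous_on UNIV H"
    and bdd: "bdd_below (range \<Phi>)"
    and argmin_ne: "Argmin \<Phi> \<noteq> {}"
    and \<alpha>_pos: "\<alpha> > 0" and \<beta>_pos: "\<beta> > 0"
    and z_min: "z \<in> Argmin \<Phi>"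
    and \<epsilon>_pos: "0 < \<epsilon>" and \<epsilon>_bound: "\<epsilon> < min (2/3 * \<alpha>) (2 / \<beta>)"
    and T_int: "is_interval T"
    and sol_x: "\<And>t. t \<in> T \<Longrightarrow> (x has_vector_derivative v t) (at t within T)"
    and sol_v: "\<And>t. t \<in> T \<Longrightarrow> (v has_vector_derivative
                   (- \<alpha> *\<^sub>R v t - G (x t) - \<beta> *\<^sub>R blinfun_apply (H (x t)) (v t))) (at t within T)"
  shows "min (\<alpha> - 3/2 * \<epsilon>) (\<beta> - \<beta>\<^sup>2 / 2 * \<epsilon>) > 0
     \<and> (\<forall>t\<in>T. \<exists>D. ((\<lambda>s. W_eps \<alpha> \<beta> \<Phi> G z \<epsilon> (x s) (v s)) has_real_derivative D) (at t within T)
                 \<and> D \<le> - min (\<alpha> - 3/2 * \<epsilon>) (\<beta> - \<beta>\<^sup>2 / 2 * \<epsilon>)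
                          * ((norm (v t))\<^sup>2 + (norm (G (x t)))\<^sup>2))"
proof -
  \<comment> \<open>The estimate is pointwise in t.\<close>
  have "\<beta> * \<epsilon> < 2"
    using \<epsilon>_bound \<beta>_pos by (simp add: field_simps)
  then have "\<beta>\<^sup>2 / 2 * \<epsilon> < \<beta>"
    using \<beta>_pos by (simp add: power2_eq_square)
  with \<epsilon>_bound have "min (\<alpha> - 3/2 * \<epsilon>) (\<beta> - \<beta>\<^sup>2 / 2 * \<epsilon>) > 0"
    by simp
  moreover have "\<exists>D. ((\<lambda>s. W_eps \<alpha> \<beta> \<Phi> G z \<epsilon> (x s) (v s)) has_real_derivative D) (at t within T)
      \<and> D \<le> - min (\<alpha> - 3/2 * \<epsilon>) (\<beta> - \<beta>\<^sup>2 / 2 * \<epsilon>) * ((norm (v t))\<^sup>2 + (norm (G (x t)))\<^sup>2)"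
    if "t \<in> T" for t
    using has_real_derivative_W_eps_along_solution[OF grad hess sol_x[OF that] sol_v[OF that]]
      W_eps_derivative_bound[OF convex_gradient_inner_minimizer_nonpos[OF convex grad z_min] less_imp_le[OF \<epsilon>_pos]]
    by blast
  ultimately show ?thesis
    by blast
qed

end
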